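(* Let $k\geq 1$ and $n\geq k+2$ be integers. Then the $k$-distance matrices of all $k$-trees with $n$ vertices are equivalent to one another: for any two $k$-trees $T,T'$ with $n$ vertices there exist square integer matrices ${\sf P},{\sf Q}$ with $\det {\sf P},\det{\sf Q}\in\{\pm1\}$ such that ${\sf D}^k(T)={\sf P}\,{\sf D}^k(T')\,{\sf Q}$.
   Context: A $k$-tree is either the complete graph on $k$ vertices, or a graph obtained from a smaller $k$-tree by adding a new vertex joined by $k$ edges to all vertices of a $k$-clique (complete subgraph on $k$ vertices). In a $k$-tree $T$, for $k$-cliques $\tau,\tau'$, a $k$-walk from $\tau$ to $\tau'$ is a sequence $\tau_1\sigma_1\tau_2\sigma_2\cdots\tau_l$ with $\tau_1=\tau$, $\tau_l=\tau'$, the $\tau_i$ being $k$-cliques and $\sigma_i$ a $(k+1)$-clique containing both $\tau_i$ and $\tau_{i+1}$; the $k$-distance $\operatorname{dist}^k(\tau,\tau')$ is the number of $(k+1)$-cliques in a shortest such walk. If $T$ has $c$ $k$-cliques $\tau_1,\dots,\tau_c$ (in any fixed order), the $k$-distance matrix ${\sf D}^k(T)$ is the $c\times c$ integer matrix with $(i,j)$-entry $0$ if $i=j$ and $\operatorname{dist}^k(\tau_i,\tau_j)$ otherwise. (All $k$-trees with $n$ vertices have the same number $k(n-k)+1$ of $k$-cliques.) *)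

theory Defs
  imports "Jordan_Normal_Form.Determinant"
begin

text \<open>Simple graphs: a vertex set V and a set E of undirected edges (2-element sets).\<close>

definition is_clique :: "'a set set \<Rightarrow> 'a set \<Rightarrow> bool" where
  "is_clique E C \<longleftrightarrow> (\<forall>u\<in>C. \<forall>w\<in>C. u \<noteq> w \<longrightarrow> {u, w} \<in> E)"

inductive ktree :: "nat \<Rightarrow> 'a set \<Rightarrow> 'a set set \<Rightarrow> bool" for k :: nat where
  base: "finite V \<Longrightarrow> card V = k \<Longrightarrow>
         ktree k V {{u, w} | u w. u \<in> V \<and> w \<in> V \<and> u \<noteq> w}"
| step: "ktree k V E \<Longrightarrow> v \<notin> V \<Longrightarrow> C \<subseteq> V \<Longrightarrow> card C = k \<Longrightarrow> is_clique E C \<Longrightarrow>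
         ktree k (insert v V) (E \<union> {{v, u} | u. u \<in> C})"

definition cliques_of :: "nat \<Rightarrow> 'a set \<Rightarrow> 'a set set \<Rightarrow> 'a set set" where
  "cliques_of m V E = {C. C \<subseteq> V \<and> finite C \<and> card C = m \<and> is_clique E C}"

definition kstep :: "nat \<Rightarrow> 'a set \<Rightarrow> 'a set set \<Rightarrow> 'a set \<Rightarrow> 'a set \<Rightarrow> bool" where
  "kstep k V E t t' \<longleftrightarrow> t \<in> cliques_of k V E \<and> t' \<in> cliques_of k V E \<and>
      (\<exists>s \<in> cliques_of (Suc k) V E. t \<subseteq> s \<and> t' \<subseteq> s)"

text \<open>k-distance: number of (k+1)-cliques in a shortest k-walk.\<close>

definition kdist :: "nat \<Rightarrow> 'a set \<Rightarrow> 'a set set \<Rightarrow> 'a set \<Rightarrow> 'a set \<Rightarrow> nat" where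
  "kdist k V E t t' = (LEAST m. (kstep k V E ^^ m) t t')"

definition kdist_matrix :: "nat \<Rightarrow> 'a set \<Rightarrow> 'a set set \<Rightarrow> 'a set list \<Rightarrow> int mat" where
  "kdist_matrix k V E cs = mat (length cs) (length cs)
     (\<lambda>(i, j). if i = j then 0 else int (kdist k V E (cs ! i) (cs ! j)))"

end

theory Submission
  imports Defs
begin

(* For a suitable enumeration of its k-cliques, the k-distance matrix D of a k-tree with n vertices
   is congruent, via a unimodular P, to a fixed matrix Kmat k N with N = 1 + (n - k) k.  Hence two
   such matrices D, D' satisfy D = P^-1 Q D' Q^T P^-T, and any other enumeration only permutes rows
   and columns.

   The normal form is built along the inductive construction of the k-tree.  Adding a vertex v over
   a k-clique C creates k new k-cliques, at distance 1 from each other and at distance d(C, x) + 1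
   from every old k-clique x, since a walk can only leave the new (k+1)-clique through C.
   Subtracting the row and column of C from the new rows and columns leaves all-ones borders and a
   block with -2 on the diagonal and -1 elsewhere; applying the old P to the old part then yields
   the next Kmat, provided P maps the all-ones vector to e_0, which is kept as part of the
   invariant. *)

section \<open>Unimodular matrices\<close>

definition unimodular :: "nat \<Rightarrow> int mat \<Rightarrow> bool" where
  "unimodular n P \<longleftrightarrow> P \<in> carrier_mat n n \<and> det P \<in> {1, -1}"

lemma unimodular_one: "unimodular n (1\<^sub>m n)"
  unfolding unimodular_def by simp

lemma unimodular_mult: "unimodular n P \<Longrightarrow> unimodular n Q \<Longrightarrow> unimodular n (P * Q)"
  unfolding unimodular_def by (auto simp: det_mult)

lemma unimodular_transpose: "unimodular n P \<Longrightarrow> unimodular n (transpose_mat P)"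
  unfolding unimodular_def by (auto simp: det_transpose)

lemma unimodular_if_right_inverse:
  assumes "P \<in> carrier_mat n n" "Q \<in> carrier_mat n n" "P * Q = 1\<^sub>m n"
  shows "unimodular n P"
proof -
  have "det P * det Q = 1" using det_mult[OF assms(1,2)] assms(3) by simp
  then show ?thesis using assms(1) unfolding unimodular_def by (auto simp: zmult_eq_1_iff)
qed

lemma unimodular_left_inverse:
  assumes "unimodular n P" obtains Q where "unimodular n Q" "Q * P = 1\<^sub>m n"
proof
  have P: "P \<in> carrier_mat n n" and "det P * det P = 1"
    using assms unfolding unimodular_def by auto
  define Q where "Q = det P \<cdot>\<^sub>m adj_mat P"
  have Q: "Q \<in> carrier_mat n n" unfolding Q_def using adj_mat(1)[OF P] by simp
  have "Q * P = det P \<cdot>\<^sub>m (adj_mat P * P)"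
    unfolding Q_def by (rule mult_smult_assoc_mat[OF adj_mat(1)[OF P] P])
  also have "\<dots> = 1\<^sub>m n"
    using adj_mat(3)[OF P] \<open>det P * det P = 1\<close> by (auto simp: smult_smult_assoc)
  finally show "Q * P = 1\<^sub>m n" .
  then show "unimodular n Q" using unimodular_if_right_inverse[OF Q P] by simp
qed

lemma equivalent_if_congruent_to_same:
  assumes A: "A \<in> carrier_mat n n" and B: "B \<in> carrier_mat n n"
    and P: "unimodular n P" and Q: "unimodular n Q"
    and "P * A * transpose_mat P = K" and "Q * B * transpose_mat Q = K"
  shows "\<exists>X Y. unimodular n X \<and> unimodular n Y \<and> A = X * B * Y"
proof -
  obtain P' where P': "unimodular n P'" "P' * P = 1\<^sub>m n"
    using unimodular_left_inverse[OF P] by blast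
  have carrier: "P \<in> carrier_mat n n" "P' \<in> carrier_mat n n" "Q \<in> carrier_mat n n"
    using P P' Q unfolding unimodular_def by auto
  have "transpose_mat P * transpose_mat P' = 1\<^sub>m n"
    using transpose_mult[OF carrier(2,1)] P'(2) by simp
  then have "A = (P' * P) * A * (transpose_mat P * transpose_mat P')" using P'(2) A by simp
  also have "\<dots> = P' * (P * A * transpose_mat P) * transpose_mat P'"
    using carrier A by (simp add: assoc_mult_mat[of _ n n _ n _ n])
  also have "\<dots> = P' * (Q * B * transpose_mat Q) * transpose_mat P'"
    using assms(5,6) by simp
  also have "\<dots> = (P' * Q) * B * (transpose_mat Q * transpose_mat P')"
    using carrier B by (simp add: assoc_mult_mat[of _ n n _ n _ n])
  finally have "A = (P' * Q) * B * (transpose_mat Q * transpose_mat P')" .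
  moreover have "unimodular n (P' * Q)" "unimodular n (transpose_mat Q * transpose_mat P')"
    using P'(1) Q by (simp_all add: unimodular_mult unimodular_transpose)
  ultimately show ?thesis by blast
qed

definition select_mat :: "nat \<Rightarrow> nat \<Rightarrow> (nat \<Rightarrow> nat) \<Rightarrow> int mat" where
  "select_mat n m g = mat n m (\<lambda>(i, j). if j = g i then 1 else 0)"

lemma select_mat_carrier [simp]: "select_mat n m g \<in> carrier_mat n m"
  by (simp add: select_mat_def)

lemma select_mat_mult:
  assumes g: "\<And>i. i < n \<Longrightarrow> g i < m" and B: "B \<in> carrier_mat m p"
  shows "select_mat n m g * B = mat n p (\<lambda>(i, j). B $$ (g i, j))"
proof (rule eq_matI)
  fix i j assume "i < dim_row (mat n p (\<lambda>(i, j). B $$ (g i, j)))"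
    "j < dim_col (mat n p (\<lambda>(i, j). B $$ (g i, j)))"
  then have ij: "i < n" "j < p" by auto
  have "(select_mat n m g * B) $$ (i, j)
      = (\<Sum>x\<in>{0..<m}. (if x = g i then 1 else 0) * B $$ (x, j))"
    using ij B by (simp add: select_mat_def scalar_prod_def)
  also have "\<dots> = (\<Sum>x\<in>{0..<m}. if x = g i then B $$ (g i, j) else 0)"
    by (rule sum.cong) auto
  also have "\<dots> = B $$ (g i, j)" using g[OF ij(1)] by simp
  finally show "(select_mat n m g * B) $$ (i, j) = mat n p (\<lambda>(i, j). B $$ (g i, j)) $$ (i, j)"
    using ij by simp
qed (use B in \<open>auto simp: select_mat_def\<close>)

lemma select_mat_congruence:
  assumes g: "\<And>i. i < n \<Longrightarrow> g i < m" and B: "B \<in> carrier_mat m m"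
  shows "select_mat n m g * B * transpose_mat (select_mat n m g)
    = mat n n (\<lambda>(i, j). B $$ (g i, g j))"
proof -
  let ?S = "select_mat n m g"
  have SB: "?S * B = mat n m (\<lambda>(i, j). B $$ (g i, j))"
    by (rule select_mat_mult) (use g B in auto)
  have SB_carrier: "transpose_mat (?S * B) \<in> carrier_mat m n"
    using mult_carrier_mat[OF select_mat_carrier B] by simp
  have "?S * B * transpose_mat ?S = transpose_mat (?S * transpose_mat (?S * B))"
    using transpose_mult[OF select_mat_carrier SB_carrier] by simp
  also have "?S * transpose_mat (?S * B) = mat n n (\<lambda>(i, j). transpose_mat (?S * B) $$ (g i, j))"
    by (rule select_mat_mult) (use g SB_carrier in auto)
  also have "\<dots> = mat n n (\<lambda>(i, j). B $$ (g j, g i))"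
    by (rule cong_mat) (auto simp: SB g)
  finally show ?thesis by auto
qed

lemma unimodular_select_mat:
  assumes g: "\<And>i. i < n \<Longrightarrow> g i < n"
    and "\<And>i. i < n \<Longrightarrow> h i < n" "\<And>i. i < n \<Longrightarrow> h (g i) = i"
  shows "unimodular n (select_mat n n g)"
proof (rule unimodular_if_right_inverse)
  have "select_mat n n g * select_mat n n h = mat n n (\<lambda>(i, j). select_mat n n h $$ (g i, j))"
    by (rule select_mat_mult) (use g in auto)
  also have "\<dots> = 1\<^sub>m n"
    using assms by (auto simp: select_mat_def)
  finally show "select_mat n n g * select_mat n n h = 1\<^sub>m n" .
qed simp_all

section \<open>The normal form\<close>

definition elim_mat :: "nat \<Rightarrow> nat \<Rightarrow> nat \<Rightarrow> int mat" where
  "elim_mat n N c =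
     mat n n (\<lambda>(i, j). (if i = j then 1 else 0) - (if N \<le> i \<and> j = c then 1 else 0))"

lemma elim_mat_carrier [simp]: "elim_mat n N c \<in> carrier_mat n n"
  by (simp add: elim_mat_def)

lemma sum_elim_mat_row:
  fixes i c n :: nat
  assumes "i < n" "c < n"
  shows "(\<Sum>x\<in>{0..<n}. ((if i = x then 1 else 0) - (if N \<le> i \<and> x = c then 1 else 0))
      * (f x :: int)) = f i - (if N \<le> i then f c else 0)"
proof -
  have "(\<Sum>x\<in>{0..<n}. ((if i = x then 1 else 0) - (if N \<le> i \<and> x = c then 1 else 0)) * f x)
      = (\<Sum>x\<in>{0..<n}. (if x = i then f i else 0)
          - (if x = c then (if N \<le> i then f c else 0) else 0))"
    by (rule sum.cong) auto
  also have "\<dots> = f i - (if N \<le> i then f c else 0)"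
    using assms by (simp add: sum_subtractf sum.delta)
  finally show ?thesis .
qed

lemma elim_mat_mult:
  assumes c: "c < n" and B: "B \<in> carrier_mat n p"
  shows "elim_mat n N c * B = mat n p (\<lambda>(i, j). B $$ (i, j) - (if N \<le> i then B $$ (c, j) else 0))"
  using B sum_elim_mat_row[OF _ c]
  by (intro eq_matI) (auto simp: elim_mat_def scalar_prod_def)

lemma mult_transpose_elim_mat:
  assumes c: "c < n" and B: "B \<in> carrier_mat p n"
  shows "B * transpose_mat (elim_mat n N c)
    = mat p n (\<lambda>(i, j). B $$ (i, j) - (if N \<le> j then B $$ (i, c) else 0))"
proof -
  have "B * transpose_mat (elim_mat n N c) = transpose_mat (elim_mat n N c * transpose_mat B)"
    using transpose_mult[of "elim_mat n N c" n n "transpose_mat B" p] B by simp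
  also have "\<dots> = mat p n (\<lambda>(i, j). B $$ (i, j) - (if N \<le> j then B $$ (i, c) else 0))"
    using elim_mat_mult[OF c, of "transpose_mat B" p N] B c by (auto intro!: eq_matI)
  finally show ?thesis .
qed

lemma elim_mat_mult_vec:
  assumes c: "c < n" and v: "v \<in> carrier_vec n"
  shows "elim_mat n N c *\<^sub>v v = vec n (\<lambda>i. v $ i - (if N \<le> i then v $ c else 0))"
  using v sum_elim_mat_row[OF _ c]
  by (intro eq_vecI) (auto simp: elim_mat_def scalar_prod_def)

lemma det_elim_mat:
  assumes "c < N" shows "det (elim_mat n N c) = 1"
proof -
  have "diag_mat (elim_mat n N c) = map (\<lambda>_. 1) [0..<n]"
    using assms by (auto simp: elim_mat_def diag_mat_def)
  then show ?thesis
    using assms by (subst det_lower_triangular[of n]) (auto simp: elim_mat_def map_replicate_const)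
qed

text \<open>Index 0 stands for the initial k-clique; the others come in blocks of k, one block for
  each added vertex.\<close>

definition Kmat :: "nat \<Rightarrow> nat \<Rightarrow> int mat" where
  "Kmat k N = mat N N (\<lambda>(i, j). if i = j then (if i = 0 then 0 else -2)
     else if i = 0 \<or> j = 0 then 1 else if (i - 1) div k = (j - 1) div k then -1 else 0)"

lemma dim_Kmat [simp]: "dim_row (Kmat k N) = N" "dim_col (Kmat k N) = N"
  by (simp_all add: Kmat_def)

lemma Kmat_extend:
  assumes k: "k \<ge> 1" and N: "N = 1 + m * k"
  shows "Kmat k (N + k) = four_block_mat (Kmat k N)
     (mat N k (\<lambda>(i, _). if i = 0 then 1 else 0)) (mat k N (\<lambda>(_, j). if j = 0 then 1 else 0))
     (mat k k (\<lambda>(i, j). if i = j then -2 else -1))"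
proof -
  have last_block: "(x - 1) div k = m" if "N \<le> x" "x < N + k" for x
    using that N k by (intro div_nat_eqI) (auto simp: algebra_simps)
  have earlier_block: "(x - 1) div k < m" if "0 < x" "x < N" for x
    using that N k by (simp add: less_mult_imp_div_less)
  show ?thesis
  proof (rule eq_matI, goal_cases)
    case (1 i j)
    then have ij: "i < N + k" "j < N + k" by simp_all
    show ?case
    proof (cases "i < N"; cases "j < N")
      assume "i < N" "j < N"
      then show ?thesis using ij by (simp add: Kmat_def)
    next
      assume "i < N" "\<not> j < N"
      then show ?thesis
        using ij last_block[of j] earlier_block[of i] by (cases "i = 0") (simp_all add: Kmat_def)
    next
      assume "\<not> i < N" "j < N"
      then show ?thesis
        using ij last_block[of i] earlier_block[of j] by (cases "j = 0") (simp_all add: Kmat_def)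
    next
      assume "\<not> i < N" "\<not> j < N"
      moreover have "0 < N" using N by simp
      ultimately show ?thesis using ij last_block[of i] last_block[of j] by (auto simp: Kmat_def)
    qed
  qed simp_all
qed

definition ext_mat :: "nat \<Rightarrow> nat \<Rightarrow> int mat \<Rightarrow> int mat" where
  "ext_mat k c A = four_block_mat A
     (mat (dim_row A) k (\<lambda>(i, _). A $$ (i, c) + 1))
     (mat k (dim_col A) (\<lambda>(_, j). A $$ (c, j) + 1))
     (mat k k (\<lambda>(i, j). if i = j then 0 else 1))"

lemma ext_mat_carrier: "A \<in> carrier_mat N N \<Longrightarrow> ext_mat k c A \<in> carrier_mat (N + k) (N + k)"
  by (simp add: ext_mat_def)

lemma elim_mat_congruence_ext_mat:
  assumes A: "A \<in> carrier_mat N N" and c: "c < N" and "A $$ (c, c) = 0"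
  shows "elim_mat (N + k) N c * ext_mat k c A * transpose_mat (elim_mat (N + k) N c)
    = four_block_mat A (mat N k (\<lambda>_. 1)) (mat k N (\<lambda>_. 1))
        (mat k k (\<lambda>(i, j). if i = j then -2 else -1))"
proof -
  have M: "ext_mat k c A \<in> carrier_mat (N + k) (N + k)" using A by (rule ext_mat_carrier)
  have "elim_mat (N + k) N c * ext_mat k c A * transpose_mat (elim_mat (N + k) N c) =
    mat (N + k) (N + k) (\<lambda>(i, j). ext_mat k c A $$ (i, j)
      - (if N \<le> i then ext_mat k c A $$ (c, j) else 0)
      - (if N \<le> j then ext_mat k c A $$ (i, c) - (if N \<le> i then ext_mat k c A $$ (c, c) else 0)
         else 0))"
    using c M by (simp add: elim_mat_mult, subst mult_transpose_elim_mat) auto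
  also have "\<dots> = four_block_mat A (mat N k (\<lambda>_. 1)) (mat k N (\<lambda>_. 1))
      (mat k k (\<lambda>(i, j). if i = j then -2 else -1))"
    using A c assms(3) by (auto simp: ext_mat_def intro!: eq_matI)
  finally show ?thesis .
qed

lemma block_diag_congruence:
  fixes P A B C X :: "'a :: comm_ring_1 mat"
  assumes P: "P \<in> carrier_mat N N" and A: "A \<in> carrier_mat N N" and B: "B \<in> carrier_mat N k"
    and C: "C \<in> carrier_mat k N" and X: "X \<in> carrier_mat k k"
  shows "four_block_mat P (0\<^sub>m N k) (0\<^sub>m k N) (1\<^sub>m k) * four_block_mat A B C X
      * transpose_mat (four_block_mat P (0\<^sub>m N k) (0\<^sub>m k N) (1\<^sub>m k))
    = four_block_mat (P * A * transpose_mat P) (P * B) (C * transpose_mat P) X"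
proof -
  have PA: "P * A \<in> carrier_mat N N" and PB: "P * B \<in> carrier_mat N k"
    using P A B by auto
  have PT: "transpose_mat P \<in> carrier_mat N N" using P by simp
  have "four_block_mat P (0\<^sub>m N k) (0\<^sub>m k N) (1\<^sub>m k) * four_block_mat A B C X
      = four_block_mat (P * A) (P * B) C X"
    using assms
    by (simp add: left_mult_one_mat[OF C] left_mult_one_mat[OF X]
        mult_four_block_mat[OF P zero_carrier_mat zero_carrier_mat one_carrier_mat A B C X])
  moreover have "transpose_mat (four_block_mat P (0\<^sub>m N k) (0\<^sub>m k N) (1\<^sub>m k))
      = four_block_mat (transpose_mat P) (0\<^sub>m N k) (0\<^sub>m k N) (1\<^sub>m k)"
    by (simp add: transpose_four_block_mat[OF P zero_carrier_mat zero_carrier_mat one_carrier_mat])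
  moreover have "four_block_mat (P * A) (P * B) C X
        * four_block_mat (transpose_mat P) (0\<^sub>m N k) (0\<^sub>m k N) (1\<^sub>m k)
      = four_block_mat (P * A * transpose_mat P) (P * B) (C * transpose_mat P) X"
    using PT C X PA PB
    by (simp add:
        mult_four_block_mat[OF PA PB C X PT zero_carrier_mat zero_carrier_mat one_carrier_mat]
        right_mult_one_mat[OF PB] right_mult_one_mat[OF X] right_mult_zero_mat[OF PA]
        right_mult_zero_mat[OF PB])
  ultimately show ?thesis by simp
qed

abbreviation ones_vec :: "nat \<Rightarrow> int vec" where
  "ones_vec n \<equiv> vec n (\<lambda>_. 1)"

lemma mult_ones_mat:
  assumes P: "P \<in> carrier_mat N N" and P_ones: "P *\<^sub>v ones_vec N = unit_vec N 0"
  shows "P * mat N k (\<lambda>_. 1) = mat N k (\<lambda>(i, _). if i = 0 then 1 else 0)"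
    and "mat k N (\<lambda>_. 1) * transpose_mat P = mat k N (\<lambda>(_, j). if j = 0 then 1 else 0)"
proof -
  show PJ: "P * mat N k (\<lambda>_. 1) = mat N k (\<lambda>(i, _). if i = 0 then 1 else 0)"
  proof (rule eq_matI)
    fix i j assume "i < dim_row (mat N k (\<lambda>(i, _). if i = 0 then 1 else (0::int)))"
      "j < dim_col (mat N k (\<lambda>(i, _). if i = 0 then 1 else (0::int)))"
    then have "i < N" "j < k" by auto
    then have "(P * mat N k (\<lambda>_. 1)) $$ (i, j) = (P *\<^sub>v ones_vec N) $ i"
      using P by (simp add: col_mat)
    then show "(P * mat N k (\<lambda>_. 1)) $$ (i, j)
        = mat N k (\<lambda>(i, _). if i = 0 then 1 else 0) $$ (i, j)"
      using P_ones \<open>i < N\<close> \<open>j < k\<close> by simp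
  qed (use P in auto)
  have "mat k N (\<lambda>_. 1) * transpose_mat P = transpose_mat (P * mat N k (\<lambda>_. 1))"
    using transpose_mult[OF P, of "mat N k (\<lambda>_. 1)" k] by auto
  then show "mat k N (\<lambda>_. 1) * transpose_mat P = mat k N (\<lambda>(_, j). if j = 0 then 1 else 0)"
    unfolding PJ by auto
qed

lemma Kmat_congruence_ext_mat:
  assumes k: "k \<ge> 1" and N: "N = 1 + m * k"
    and A: "A \<in> carrier_mat N N" and c: "c < N" and "A $$ (c, c) = 0"
    and P: "unimodular N P" and PAP: "P * A * transpose_mat P = Kmat k N"
    and P_ones: "P *\<^sub>v ones_vec N = unit_vec N 0"
  obtains P' where "unimodular (N + k) P'"
    "P' * ext_mat k c A * transpose_mat P' = Kmat k (N + k)"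
    "P' *\<^sub>v ones_vec (N + k) = unit_vec (N + k) 0"
proof
  define D where "D = four_block_mat P (0\<^sub>m N k) (0\<^sub>m k N) (1\<^sub>m k)"
  define L where "L = elim_mat (N + k) N c"
  have Pc: "P \<in> carrier_mat N N" using P unfolding unimodular_def by blast
  have Dc: "D \<in> carrier_mat (N + k) (N + k)" and Lc: "L \<in> carrier_mat (N + k) (N + k)"
    using Pc unfolding D_def L_def by auto
  have "det D = det P"
    unfolding D_def by (simp add: det_four_block_mat_upper_right_zero[OF Pc refl zero_carrier_mat])
  then show "unimodular (N + k) (D * L)"
    using P Dc Lc c det_elim_mat unfolding unimodular_def L_def by (simp add: det_mult)
  have M: "ext_mat k c A \<in> carrier_mat (N + k) (N + k)" using A by (rule ext_mat_carrier)
  have "D * L * ext_mat k c A * transpose_mat (D * L)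
      = D * (L * ext_mat k c A * transpose_mat L) * transpose_mat D"
    using Dc Lc M
    by (simp add: transpose_mult[OF Dc Lc] assoc_mult_mat[of _ "N + k" "N + k" _ "N + k" _ "N + k"])
  also have "\<dots> = Kmat k (N + k)"
    unfolding L_def elim_mat_congruence_ext_mat[OF A c assms(5)] D_def
    using Pc A
    by (simp add: block_diag_congruence PAP mult_ones_mat[OF Pc P_ones] Kmat_extend[OF k N])
  finally show "D * L * ext_mat k c A * transpose_mat (D * L) = Kmat k (N + k)" .
  have "L *\<^sub>v ones_vec (N + k) = ones_vec N @\<^sub>v 0\<^sub>v k"
    unfolding L_def using c by (auto simp: elim_mat_mult_vec)
  then have "D * L *\<^sub>v ones_vec (N + k) = D *\<^sub>v (ones_vec N @\<^sub>v 0\<^sub>v k)"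
    using Dc Lc by simp
  also have "\<dots> = unit_vec (N + k) 0"
    unfolding D_def using Pc P_ones N
    by (subst four_block_mat_mult_vec[OF Pc zero_carrier_mat zero_carrier_mat one_carrier_mat])
      (auto intro!: eq_vecI)
  finally show "D * L *\<^sub>v ones_vec (N + k) = unit_vec (N + k) 0" .
qed

section \<open>k-cliques and k-distances\<close>

lemma relpowp_sym: "symp r \<Longrightarrow> (r ^^ m) a b \<Longrightarrow> (r ^^ m) b a"
proof (induction m arbitrary: b)
  case (Suc m)
  then obtain y where "(r ^^ m) a y" "r y b" by auto
  with Suc show ?case by (metis relpowp_Suc_I2 sympD)
qed simp

lemma symp_kstep: "symp (kstep k V E)"
  unfolding kstep_def by (auto intro: sympI)

lemma kdist_sym: "kdist k V E t t' = kdist k V E t' t"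
  unfolding kdist_def by (metis relpowp_sym symp_kstep)

lemma kdist_refl [simp]: "kdist k V E t t = 0"
  unfolding kdist_def by (rule Least_equality) auto

lemma kdist_walk: "(kstep k V E)\<^sup>*\<^sup>* t t' \<Longrightarrow> (kstep k V E ^^ kdist k V E t t') t t'"
  unfolding kdist_def rtranclp_power by (rule LeastI_ex)

lemma kdist_le: "(kstep k V E ^^ m) t t' \<Longrightarrow> kdist k V E t t' \<le> m"
  unfolding kdist_def by (rule Least_le)

lemma kdist_eqI:
  "(kstep k V E ^^ m) t t' \<Longrightarrow> (\<And>m'. (kstep k V E ^^ m') t t' \<Longrightarrow> m \<le> m')
    \<Longrightarrow> kdist k V E t t' = m"
  unfolding kdist_def by (rule Least_equality)

lemma subset_eq_Diff_singleton:
  assumes "finite C" "S \<subseteq> C" "card S + 1 = card C"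
  shows "\<exists>u\<in>C. S = C - {u}"
proof -
  have "card (C - S) = 1" using assms by (simp add: card_Diff_subset finite_subset)
  then obtain u where "C - S = {u}" by (auto simp: card_Suc_eq)
  then show ?thesis using assms(2) by (intro bexI[of _ u]) auto
qed

lemma cliques_of_complete:
  assumes "finite V" "card V = k"
  shows "cliques_of k V {{u, w} | u w. u \<in> V \<and> w \<in> V \<and> u \<noteq> w} = {V}"
  using assms card_subset_eq unfolding cliques_of_def is_clique_def by fastforce

lemma finite_cliques_of: "finite V \<Longrightarrow> finite (cliques_of m V E)"
  by (rule finite_subset[of _ "Pow V"]) (auto simp: cliques_of_def)

definition kconnected :: "nat \<Rightarrow> 'a set \<Rightarrow> 'a set set \<Rightarrow> bool" where
  "kconnected k V E \<longleftrightarrow> (\<forall>t\<in>cliques_of k V E. \<forall>t'\<in>cliques_of k V E. (kstep k V E)\<^sup>*\<^sup>* t t')"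

lemma kdist_matrix_eq: "kdist_matrix k V E cs =
    mat (length cs) (length cs) (\<lambda>(i, j). int (kdist k V E (cs ! i) (cs ! j)))"
  unfolding kdist_matrix_def by (rule cong_mat) auto

lemma nth_reindex:
  assumes "set xs = set ys" "length xs = length ys"
  obtains g where "\<And>i. i < length xs \<Longrightarrow> g i < length ys \<and> ys ! g i = xs ! i"
proof -
  have "\<forall>i. \<exists>j. i < length xs \<longrightarrow> j < length ys \<and> ys ! j = xs ! i"
    using assms by (metis in_set_conv_nth nth_mem)
  then show ?thesis using that by metis
qed

lemma kdist_matrix_reindex:
  assumes xs: "distinct xs" and ys: "distinct ys" and set: "set xs = set ys"
  obtains S where "unimodular (length xs) S"
    "kdist_matrix k V E xs = S * kdist_matrix k V E ys * transpose_mat S"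
proof -
  have len: "length xs = length ys" using xs ys set by (metis distinct_card)
  obtain g where g: "\<And>i. i < length xs \<Longrightarrow> g i < length xs \<and> ys ! g i = xs ! i"
    using nth_reindex[OF set len] len by metis
  obtain h where h: "\<And>i. i < length xs \<Longrightarrow> h i < length xs \<and> xs ! h i = ys ! i"
    using nth_reindex[OF set[symmetric] len[symmetric]] len by metis
  have "h (g i) = i" if "i < length xs" for i
    using g[OF that] h[of "g i"] nth_eq_iff_index_eq[OF xs] that by metis
  then have "unimodular (length xs) (select_mat (length xs) (length xs) g)"
    using g h by (intro unimodular_select_mat[of "length xs" g h]) auto
  moreover have "kdist_matrix k V E xs
      = select_mat (length xs) (length xs) g * kdist_matrix k V E ys
        * transpose_mat (select_mat (length xs) (length xs) g)"
    using g len by (subst select_mat_congruence) (auto simp: kdist_matrix_eq intro!: cong_mat)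
  ultimately show thesis using that by blast
qed

definition Kmat_normal_form :: "nat \<Rightarrow> 'a set \<Rightarrow> 'a set set \<Rightarrow> bool" where
  "Kmat_normal_form k V E \<longleftrightarrow> (\<exists>cs P. distinct cs \<and> set cs = cliques_of k V E \<and>
     unimodular (length cs) P \<and> P * kdist_matrix k V E cs * transpose_mat P = Kmat k (length cs) \<and>
     P *\<^sub>v ones_vec (length cs) = unit_vec (length cs) 0)"

section \<open>Adding a vertex over a k-clique\<close>

locale ktree_extension =
  fixes k :: nat and V :: "'a set" and E :: "'a set set" and v :: 'a and C :: "'a set"
  assumes finite_V: "finite V" and edges_subset: "\<forall>e\<in>E. e \<subseteq> V"
    and v_notin: "v \<notin> V" and C_subset: "C \<subseteq> V" and card_C: "card C = k"
    and clique_C: "is_clique E C" and k_pos: "k \<ge> 1"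
begin

definition "V' = insert v V"
definition "E' = E \<union> {{v, u} | u. u \<in> C}"

definition "new_cliques = (\<lambda>u. insert v (C - {u})) ` C"

definition "facets = insert C new_cliques"

definition "retract t = (if t \<in> new_cliques then C else t)"

lemma finite_C: "finite C"
  using finite_V C_subset finite_subset by blast

lemma finite_new_cliques: "finite new_cliques"
  unfolding new_cliques_def using finite_C by simp

lemma v_notin_C: "v \<notin> C"
  using v_notin C_subset by blast

lemma is_clique_old_iff:
  assumes "S \<subseteq> V" shows "is_clique E' S \<longleftrightarrow> is_clique E S"
proof -
  have "{u, w} \<notin> {{v, x} | x. x \<in> C}" if "u \<in> S" "w \<in> S" for u w
    using that assms v_notin by (auto simp: doubleton_eq_iff)
  then show ?thesis unfolding is_clique_def E'_def by blast
qed

lemma is_clique_apex: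
  assumes "is_clique E' S" "v \<in> S" shows "S - {v} \<subseteq> C"
proof
  fix w assume w: "w \<in> S - {v}"
  then have "{v, w} \<in> E'" using assms unfolding is_clique_def by auto
  moreover have "{v, w} \<notin> E" using edges_subset v_notin by blast
  ultimately obtain x where "x \<in> C" "{v, w} = {v, x}" unfolding E'_def by blast
  then show "w \<in> C" using w by (auto simp: doubleton_eq_iff)
qed

lemma is_clique_new:
  assumes "S \<subseteq> insert v C" shows "is_clique E' S"
  unfolding is_clique_def
proof (intro ballI impI)
  fix u w assume "u \<in> S" "w \<in> S" "u \<noteq> w"
  then consider "u \<in> C" "w \<in> C" | "u = v" "w \<in> C" | "w = v" "u \<in> C"
    using assms by blast
  then show "{u, w} \<in> E'"
    using clique_C \<open>u \<noteq> w\<close> unfolding is_clique_def E'_def by cases (auto simp: insert_commute)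
qed

lemma cliques_k: "cliques_of k V' E' = cliques_of k V E \<union> new_cliques"
proof (intro equalityI subsetI)
  fix S assume S: "S \<in> cliques_of k V' E'"
  show "S \<in> cliques_of k V E \<union> new_cliques"
  proof (cases "v \<in> S")
    case True
    then have "S - {v} \<subseteq> C" "card (S - {v}) + 1 = card C"
      using S is_clique_apex card_C k_pos unfolding cliques_of_def by auto
    then obtain u where "u \<in> C" "S - {v} = C - {u}"
      using subset_eq_Diff_singleton finite_C by blast
    then show ?thesis using True unfolding new_cliques_def by blast
  next
    case False
    then show ?thesis using S is_clique_old_iff unfolding cliques_of_def V'_def by blast
  qed
next
  fix S assume "S \<in> cliques_of k V E \<union> new_cliques"
  then show "S \<in> cliques_of k V' E'"
  proof
    assume "S \<in> cliques_of k V E"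
    then show ?thesis using is_clique_old_iff unfolding cliques_of_def V'_def by blast
  next
    assume "S \<in> new_cliques"
    then obtain u where u: "u \<in> C" "S = insert v (C - {u})" unfolding new_cliques_def by blast
    then have "S \<subseteq> insert v C" by blast
    then show ?thesis using u is_clique_new finite_C v_notin_C card_C k_pos C_subset
      unfolding cliques_of_def V'_def by (auto simp: card_insert_if)
  qed
qed

lemma cliques_Suc_k: "cliques_of (Suc k) V' E' = cliques_of (Suc k) V E \<union> {insert v C}"
proof (intro equalityI subsetI)
  fix S assume S: "S \<in> cliques_of (Suc k) V' E'"
  show "S \<in> cliques_of (Suc k) V E \<union> {insert v C}"
  proof (cases "v \<in> S")
    case True
    then have "S - {v} \<subseteq> C" "card (S - {v}) = card C"
      using S is_clique_apex card_C unfolding cliques_of_def by auto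
    then have "S - {v} = C" using card_subset_eq finite_C by blast
    then show ?thesis using True by blast
  next
    case False
    then show ?thesis using S is_clique_old_iff unfolding cliques_of_def V'_def by blast
  qed
next
  fix S assume "S \<in> cliques_of (Suc k) V E \<union> {insert v C}"
  then show "S \<in> cliques_of (Suc k) V' E'"
    using is_clique_old_iff is_clique_new finite_C v_notin_C card_C C_subset
    unfolding cliques_of_def V'_def by auto
qed

lemma C_in_cliques: "C \<in> cliques_of k V E"
  unfolding cliques_of_def using C_subset finite_C card_C clique_C by auto

lemma new_cliques_not_old: "t \<in> new_cliques \<Longrightarrow> t \<notin> cliques_of k V E"
  unfolding cliques_of_def new_cliques_def using v_notin by auto

lemma facets_eq: "facets = {t \<in> cliques_of k V' E'. t \<subseteq> insert v C}"
proof (intro equalityI subsetI)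
  fix t assume "t \<in> facets"
  then show "t \<in> {t \<in> cliques_of k V' E'. t \<subseteq> insert v C}"
    using cliques_k C_in_cliques unfolding facets_def new_cliques_def by auto
next
  fix t assume t: "t \<in> {t \<in> cliques_of k V' E'. t \<subseteq> insert v C}"
  show "t \<in> facets"
  proof (cases "v \<in> t")
    case True
    then have "t - {v} \<subseteq> C" "card (t - {v}) + 1 = card C"
      using t card_C k_pos unfolding cliques_of_def by auto
    then obtain u where "u \<in> C" "t - {v} = C - {u}"
      using subset_eq_Diff_singleton finite_C by blast
    then show ?thesis using True unfolding facets_def new_cliques_def by blast
  next
    case False
    then have "t \<subseteq> C" "card t = card C" using t card_C unfolding cliques_of_def by auto
    then show ?thesis using card_subset_eq finite_C unfolding facets_def by blast
  qed
qed

lemma kstep_extension_iff: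
  "kstep k V' E' t t' \<longleftrightarrow> kstep k V E t t' \<or> (t \<in> facets \<and> t' \<in> facets)"
proof
  assume "kstep k V' E' t t'"
  then obtain s where s: "s \<in> cliques_of (Suc k) V' E'" "t \<subseteq> s" "t' \<subseteq> s"
    and t: "t \<in> cliques_of k V' E'" "t' \<in> cliques_of k V' E'"
    unfolding kstep_def by blast
  show "kstep k V E t t' \<or> (t \<in> facets \<and> t' \<in> facets)"
  proof (cases "s = insert v C")
    case True
    then show ?thesis using s t facets_eq by blast
  next
    case False
    then have s_old: "s \<in> cliques_of (Suc k) V E" using s cliques_Suc_k by blast
    then have "t \<subseteq> V" "t' \<subseteq> V" using s unfolding cliques_of_def by auto
    then have "t \<in> cliques_of k V E" "t' \<in> cliques_of k V E"
      using t is_clique_old_iff unfolding cliques_of_def by auto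
    then show ?thesis using s_old s unfolding kstep_def by blast
  qed
next
  assume "kstep k V E t t' \<or> (t \<in> facets \<and> t' \<in> facets)"
  then show "kstep k V' E' t t'"
    using cliques_k cliques_Suc_k facets_eq unfolding kstep_def by blast
qed

lemma retract_kstep:
  "kstep k V' E' t t' \<Longrightarrow> retract t = retract t' \<or> kstep k V E (retract t) (retract t')"
  using kstep_extension_iff new_cliques_not_old
  unfolding retract_def facets_def kstep_def by auto

lemma retract_walk:
  "(kstep k V' E' ^^ m) t t' \<Longrightarrow> \<exists>m'\<le>m. (kstep k V E ^^ m') (retract t) (retract t')"
proof (induction m arbitrary: t')
  case (Suc m)
  then obtain y where y: "(kstep k V' E' ^^ m) t y" "kstep k V' E' y t'" by auto
  from Suc.IH[OF y(1)] obtain m' where "m' \<le> m" "(kstep k V E ^^ m') (retract t) (retract y)"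
    by blast
  with retract_kstep[OF y(2)] show ?case by (metis le_SucI Suc_le_mono relpowp_Suc_I)
qed simp

lemma walk_extension: "(kstep k V E ^^ m) t t' \<Longrightarrow> (kstep k V' E' ^^ m) t t'"
  using relpowp_mono kstep_extension_iff by metis

lemma rtranclp_extension: "(kstep k V E)\<^sup>*\<^sup>* t t' \<Longrightarrow> (kstep k V' E')\<^sup>*\<^sup>* t t'"
  using walk_extension rtranclp_power by metis

lemma retract_old: "t \<in> cliques_of k V E \<Longrightarrow> retract t = t"
  unfolding retract_def using new_cliques_not_old by auto

lemma kdist_extension_old:
  assumes "x \<in> cliques_of k V E" "y \<in> cliques_of k V E" "(kstep k V E)\<^sup>*\<^sup>* x y"
  shows "kdist k V' E' x y = kdist k V E x y"
proof (rule kdist_eqI)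
  show "(kstep k V' E' ^^ kdist k V E x y) x y"
    using kdist_walk[OF assms(3)] by (rule walk_extension)
  fix m assume "(kstep k V' E' ^^ m) x y"
  then show "kdist k V E x y \<le> m"
    using retract_walk retract_old assms kdist_le by (metis le_trans)
qed

lemma kdist_extension_new_old:
  assumes w: "w \<in> new_cliques" and x: "x \<in> cliques_of k V E" and C_x: "(kstep k V E)\<^sup>*\<^sup>* C x"
  shows "kdist k V' E' w x = kdist k V E C x + 1"
proof (rule kdist_eqI)
  have "kstep k V' E' w C" using w kstep_extension_iff unfolding facets_def by blast
  then show "(kstep k V' E' ^^ (kdist k V E C x + 1)) w x"
    using relpowp_Suc_I2 walk_extension[OF kdist_walk[OF C_x]] by fastforce
  fix m assume walk: "(kstep k V' E' ^^ m) w x"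
  have "m \<noteq> 0" using walk w x new_cliques_not_old by (metis relpowp_0_E)
  then obtain m0 y where m0: "m = Suc m0" "kstep k V' E' w y" "(kstep k V' E' ^^ m0) y x"
    using walk by (metis not0_implies_Suc relpowp_Suc_E2)
  have "\<not> kstep k V E w y" using w new_cliques_not_old unfolding kstep_def by blast
  then have "retract y = C" using m0(2) kstep_extension_iff unfolding facets_def retract_def by auto
  then show "kdist k V E C x + 1 \<le> m"
    using retract_walk[OF m0(3)] retract_old[OF x] m0(1) kdist_le by fastforce
qed

lemma kdist_extension_new_new:
  assumes "w \<in> new_cliques" "w' \<in> new_cliques" "w \<noteq> w'"
  shows "kdist k V' E' w w' = 1"
proof (rule kdist_eqI)
  show "(kstep k V' E' ^^ 1) w w'" using assms kstep_extension_iff unfolding facets_def by auto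
  fix m assume "(kstep k V' E' ^^ m) w w'"
  then show "1 \<le> m" using assms(3) by (cases m) auto
qed

lemma kconnected_extension:
  assumes "kconnected k V E" shows "kconnected k V' E'"
proof -
  have "(kstep k V' E')\<^sup>*\<^sup>* C t \<and> (kstep k V' E')\<^sup>*\<^sup>* t C" if t: "t \<in> cliques_of k V' E'" for t
  proof (cases "t \<in> new_cliques")
    case True
    then show ?thesis using kstep_extension_iff unfolding facets_def by blast
  next
    case False
    then have "t \<in> cliques_of k V E" using t cliques_k by blast
    then show ?thesis
      using assms C_in_cliques rtranclp_extension unfolding kconnected_def by blast
  qed
  then show ?thesis unfolding kconnected_def by (meson rtranclp_trans)
qed

lemma card_new_cliques: "card new_cliques = k"
proof -
  have "inj_on (\<lambda>u. insert v (C - {u})) C"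
  proof (rule inj_onI)
    fix x y assume "x \<in> C" "y \<in> C" "insert v (C - {x}) = insert v (C - {y})"
    then have "C - {x} = C - {y}" using v_notin_C by (metis Diff_insert_absorb insertCI insert_Diff)
    then show "x = y" using \<open>x \<in> C\<close> by blast
  qed
  then show ?thesis unfolding new_cliques_def using card_C card_image by blast
qed

lemma kdist_matrix_extension:
  assumes conn: "kconnected k V E"
    and cs: "distinct cs" "set cs = cliques_of k V E"
    and ws: "distinct ws" "set ws = new_cliques"
    and c: "c < length cs" "cs ! c = C"
  shows "kdist_matrix k V' E' (cs @ ws) = ext_mat k c (kdist_matrix k V E cs)"
proof -
  define N where "N = length cs"
  have len_ws: "length ws = k" using ws distinct_card card_new_cliques by metis
  have old: "cs ! i \<in> cliques_of k V E" if "i < N" for i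
    using that cs(2) nth_mem unfolding N_def by blast
  have new: "ws ! j \<in> new_cliques" if "j < k" for j
    using that ws(2) len_ws nth_mem by blast
  have walk: "(kstep k V E)\<^sup>*\<^sup>* x y" if "x \<in> cliques_of k V E" "y \<in> cliques_of k V E" for x y
    using conn that unfolding kconnected_def by blast
  have new_old: "kdist k V' E' (ws ! j) (cs ! i) = kdist k V E (cs ! c) (cs ! i) + 1"
    if "j < k" "i < N" for i j
    using kdist_extension_new_old[OF new[OF that(1)] old[OF that(2)]
        walk[OF C_in_cliques old[OF that(2)]]] c
    by simp
  have new_new: "kdist k V' E' (ws ! i) (ws ! j) = (if i = j then 0 else 1)"
    if "i < k" "j < k" for i j
    using kdist_extension_new_new[OF new new] ws(1) len_ws that by (simp add: nth_eq_iff_index_eq)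
  show ?thesis
  proof (rule eq_matI)
    fix i j assume "i < dim_row (ext_mat k c (kdist_matrix k V E cs))"
      "j < dim_col (ext_mat k c (kdist_matrix k V E cs))"
    then have "i < N + k" "j < N + k" by (simp_all add: ext_mat_def kdist_matrix_def N_def)
    then show "kdist_matrix k V' E' (cs @ ws) $$ (i, j)
        = ext_mat k c (kdist_matrix k V E cs) $$ (i, j)"
      using c(1) len_ws kdist_extension_old[OF old old walk[OF old old]] new_old new_new
        new_old[of "i - N" j] kdist_sym[of k V' E' "cs ! i" "ws ! (j - N)"] kdist_sym[of k V E]
      by (auto simp: kdist_matrix_eq ext_mat_def nth_append N_def)
  qed (simp_all add: len_ws ext_mat_def kdist_matrix_def)
qed

lemma card_cliques_extension:
  "card (cliques_of k V' E') = card (cliques_of k V E) + k"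
proof -
  have "cliques_of k V E \<inter> new_cliques = {}" using new_cliques_not_old by blast
  then show ?thesis
    unfolding cliques_k
    using card_Un_disjoint finite_cliques_of[OF finite_V] finite_new_cliques card_new_cliques
    by metis
qed

lemma Kmat_normal_form_extension:
  assumes conn: "kconnected k V E" and card: "card (cliques_of k V E) = 1 + m * k"
    and normal: "Kmat_normal_form k V E"
  shows "Kmat_normal_form k V' E'"
proof -
  obtain cs P where cs: "distinct cs" "set cs = cliques_of k V E" and P: "unimodular (length cs) P"
    "P * kdist_matrix k V E cs * transpose_mat P = Kmat k (length cs)"
    "P *\<^sub>v ones_vec (length cs) = unit_vec (length cs) 0"
    using normal unfolding Kmat_normal_form_def by blast
  obtain ws where ws: "distinct ws" "set ws = new_cliques"
    using finite_distinct_list[OF finite_new_cliques] by blast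
  have len: "length cs = 1 + m * k" "length ws = k"
    using cs ws card card_new_cliques by (metis distinct_card)+
  obtain c where c: "c < length cs" "cs ! c = C"
    using C_in_cliques cs(2) by (metis in_set_conv_nth)
  have "kdist_matrix k V E cs $$ (c, c) = 0" using c by (simp add: kdist_matrix_def)
  then obtain P' where "unimodular (length cs + k) P'"
    "P' * ext_mat k c (kdist_matrix k V E cs) * transpose_mat P' = Kmat k (length cs + k)"
    "P' *\<^sub>v ones_vec (length cs + k) = unit_vec (length cs + k) 0"
    using Kmat_congruence_ext_mat[OF k_pos len(1) _ c(1) _ P] by (auto simp: kdist_matrix_def)
  moreover have "distinct (cs @ ws)" "set (cs @ ws) = cliques_of k V' E'"
    using cs ws new_cliques_not_old cliques_k by auto
  moreover have "kdist_matrix k V' E' (cs @ ws) = ext_mat k c (kdist_matrix k V E cs)"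
    by (rule kdist_matrix_extension[OF conn cs ws c])
  ultimately show ?thesis
    unfolding Kmat_normal_form_def using len by (intro exI[of _ "cs @ ws"] exI[of _ P']) simp
qed

end

section \<open>k-trees\<close>

lemma ktree_finite_edges_subset: "ktree k V E \<Longrightarrow> finite V \<and> (\<forall>e\<in>E. e \<subseteq> V)"
  by (induction rule: ktree.induct) auto

lemma ktree_extension_if_step:
  "ktree k V E \<Longrightarrow> v \<notin> V \<Longrightarrow> C \<subseteq> V \<Longrightarrow> card C = k \<Longrightarrow> is_clique E C \<Longrightarrow> k \<ge> 1
    \<Longrightarrow> ktree_extension k V E v C"
  using ktree_finite_edges_subset by unfold_locales blast+

lemma ktree_kconnected: "ktree k V E \<Longrightarrow> k \<ge> 1 \<Longrightarrow> kconnected k V E"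
proof (induction rule: ktree.induct)
  case (base V)
  then show ?case by (simp add: kconnected_def cliques_of_complete)
next
  case (step V E v C)
  interpret ktree_extension k V E v C using step by (intro ktree_extension_if_step)
  show ?case using kconnected_extension step unfolding V'_def E'_def by blast
qed

lemma ktree_card_cliques:
  "ktree k V E \<Longrightarrow> k \<ge> 1 \<Longrightarrow> card (cliques_of k V E) = 1 + (card V - k) * k"
proof (induction rule: ktree.induct)
  case (base V)
  then show ?case by (simp add: cliques_of_complete)
next
  case (step V E v C)
  interpret ktree_extension k V E v C using step by (intro ktree_extension_if_step)
  have "k \<le> card V" using card_mono[OF finite_V C_subset] card_C by simp
  then have "card (insert v V) - k = Suc (card V - k)" using finite_V v_notin by simp
  then show ?case using card_cliques_extension step unfolding V'_def E'_def by simp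
qed

lemma ktree_Kmat_normal_form: "ktree k V E \<Longrightarrow> k \<ge> 1 \<Longrightarrow> Kmat_normal_form k V E"
proof (induction rule: ktree.induct)
  case (base V)
  have "kdist_matrix k V {{u, w} | u w. u \<in> V \<and> w \<in> V \<and> u \<noteq> w} [V] = Kmat k 1"
    by (auto simp: kdist_matrix_def Kmat_def)
  moreover have "1\<^sub>m 1 *\<^sub>v ones_vec 1 = (unit_vec 1 0 :: int vec)" by auto
  moreover have "cliques_of k V {{u, w} | u w. u \<in> V \<and> w \<in> V \<and> u \<noteq> w} = {V}"
    using base by (intro cliques_of_complete) auto
  ultimately show ?case using unimodular_one
    unfolding Kmat_normal_form_def by (intro exI[of _ "[V]"] exI[of _ "1\<^sub>m 1"]) simp
next
  case (step V E v C)
  interpret ktree_extension k V E v C using step by (intro ktree_extension_if_step)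
  show ?case
    using Kmat_normal_form_extension ktree_kconnected ktree_card_cliques step
    unfolding V'_def E'_def by blast
qed

lemma kdist_matrix_congruent_Kmat:
  assumes "ktree k V E" "k \<ge> 1" "distinct cs" "set cs = cliques_of k V E"
  obtains P where "unimodular (length cs) P"
    "P * kdist_matrix k V E cs * transpose_mat P = Kmat k (length cs)"
proof -
  obtain cs0 P0 where cs0: "distinct cs0" "set cs0 = cliques_of k V E"
    and P0: "unimodular (length cs0) P0"
      "P0 * kdist_matrix k V E cs0 * transpose_mat P0 = Kmat k (length cs0)"
    using ktree_Kmat_normal_form[OF assms(1,2)] unfolding Kmat_normal_form_def by blast
  have len: "length cs0 = length cs" using assms(3,4) cs0 by (metis distinct_card)
  obtain S where S: "unimodular (length cs) S"
    "kdist_matrix k V E cs0 = S * kdist_matrix k V E cs * transpose_mat S"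
    using kdist_matrix_reindex[OF cs0(1) assms(3), of k V E] cs0(2) assms(4) len by metis
  have carrier: "P0 \<in> carrier_mat (length cs) (length cs)" "S \<in> carrier_mat (length cs) (length cs)"
    "kdist_matrix k V E cs \<in> carrier_mat (length cs) (length cs)"
    using P0(1) S(1) len unfolding unimodular_def by (auto simp: kdist_matrix_def)
  let ?n = "length cs"
  have "P0 * S * kdist_matrix k V E cs * transpose_mat (P0 * S)
      = P0 * kdist_matrix k V E cs0 * transpose_mat P0"
    using carrier by (simp add: S(2) transpose_mult assoc_mult_mat[of _ ?n ?n _ ?n _ ?n])
  then show ?thesis
    using that[of "P0 * S"] P0 S(1) len by (simp add: unimodular_mult)
qed

theorem mainTheorem2:
  fixes k n :: nat and V :: "'a set" and E :: "'a set set"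
    and V' :: "'b set" and E' :: "'b set set"
    and cs :: "'a set list" and cs' :: "'b set list"
  assumes "k \<ge> 1" and "n \<ge> k + 2"
    and "ktree k V E" and "card V = n"
    and "ktree k V' E'" and "card V' = n"
    and "distinct cs" and "set cs = cliques_of k V E"
    and "distinct cs'" and "set cs' = cliques_of k V' E'"
  shows "\<exists>P Q. P \<in> carrier_mat (length cs) (length cs) \<and>
               Q \<in> carrier_mat (length cs') (length cs') \<and>
               det P \<in> {1, -1} \<and> det Q \<in> {1, -1} \<and>
               kdist_matrix k V E cs = P * kdist_matrix k V' E' cs' * Q"
proof -
  have len: "length cs' = length cs"
    using assms ktree_card_cliques by (metis distinct_card)
  obtain P where P: "unimodular (length cs) P"
    "P * kdist_matrix k V E cs * transpose_mat P = Kmat k (length cs)"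
    using kdist_matrix_congruent_Kmat[OF assms(3,1,7,8)] .
  obtain Q where Q: "unimodular (length cs) Q"
    "Q * kdist_matrix k V' E' cs' * transpose_mat Q = Kmat k (length cs)"
    using kdist_matrix_congruent_Kmat[OF assms(5,1,9,10)] len by metis
  have "kdist_matrix k V E cs \<in> carrier_mat (length cs) (length cs)"
    "kdist_matrix k V' E' cs' \<in> carrier_mat (length cs) (length cs)"
    using len by (simp_all add: kdist_matrix_def)
  then show ?thesis
    using equivalent_if_congruent_to_same[OF _ _ P(1) Q(1) P(2) Q(2)] len
    unfolding unimodular_def by auto
qed

end
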